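(* Let $L=\mathbb{Z}\langle E_v\rangle_v$ and let $\mathcal{K}=\mathbb{R}_{\ge0}\langle V_j\rangle_j\subset L\otimes\mathbb{R}$ be a cone generated by finitely many vectors $V_j$ all of whose coordinates are positive. Let $S(\mathbf{t})=\sum_{l\in\mathcal{K}\cap L}c^S(l)\mathbf{t}^l$ be a series supported in $\mathcal{K}$, with counting function $Q^S(l)=\sum_{\tilde l\not\ge l}c^S(\tilde l)$, and assume there is a quasipolynomial $\mathfrak{Q}^S$ on $L$ and $l_*\in L$ with $\mathfrak{Q}^S(l)=Q^S(l)$ for all $l\in l_*+\mathcal{K}$. Then for any $l_0\in L$ the series $\mathbf{t}^{-l_0}S(\mathbf{t})|_{\ge0}$ admits a quasipolynomial and a periodic constant in the cone $\mathcal{K}$, and $$\mathfrak{Q}^S(l_0)=\big(\mathbf{t}^{-l_0}S|_{\not\ge0}\big)(\mathbf{1})+\mathrm{pc}^{\mathcal{K}}\big(\mathbf{t}^{-l_0}S|_{\ge0}\big).$$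
   Context: For a Laurent-type series $T=\sum_l c(l)\mathbf{t}^l$ in variables indexed by the coordinates of $L$, $T|_{\ge0}$ is the sum of the terms with $l\ge0$ (all coordinates nonnegative) and $T|_{\not\ge0}$ the sum of the remaining terms (here a finite Laurent polynomial); $T(\mathbf{1})$ means substituting $t_v=1$ for all $v$. A quasipolynomial on $L$ is a function which is polynomial on each coset of some finite index sublattice. A series with counting function $Q$ admits a quasipolynomial $\mathfrak{Q}$ in the cone $\mathcal{K}$ if $Q=\mathfrak{Q}$ on $(l_*+\mathcal{K})\cap L$ for some $l_*$; its periodic constant is $\mathrm{pc}^{\mathcal{K}}=\mathfrak{Q}(0)$, where $\mathfrak{Q}(0)$ means the value at $0$ of the polynomial representing $\mathfrak{Q}$ on the sublattice containing $0$. *)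

theory Defs
  imports Complex_Main "HOL-Library.Function_Algebras"
begin

text \<open>Lattice L = Z^V, elements are functions 'v => int (V finite).
  Series are given by their coefficient functions c :: ('v => int) => real.
  The pointwise order on functions is the coordinatewise order.\<close>

definition real_vec :: "('v \<Rightarrow> int) \<Rightarrow> ('v \<Rightarrow> real)" where
  "real_vec l = (\<lambda>v. real_of_int (l v))"

definition gen_cone :: "('v \<Rightarrow> int) set \<Rightarrow> ('v \<Rightarrow> real) set" where
  "gen_cone Vs = {x. \<exists>a. (\<forall>j\<in>Vs. 0 \<le> a j) \<and>
      x = (\<lambda>v. \<Sum>j\<in>Vs. a j * real_of_int (j v))}"

definition poly_fun :: "(('v::finite \<Rightarrow> int) \<Rightarrow> real) \<Rightarrow> bool" where
  "poly_fun p \<longleftrightarrow> (\<exists>A :: ('v \<Rightarrow> nat) set. \<exists>a :: ('v \<Rightarrow> nat) \<Rightarrow> real. finite A \<and>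
      (\<forall>x. p x = (\<Sum>\<alpha>\<in>A. a \<alpha> * (\<Prod>v\<in>UNIV. real_of_int (x v) ^ \<alpha> v))))"

definition quasipoly :: "(('v::finite \<Rightarrow> int) \<Rightarrow> real) \<Rightarrow> bool" where
  "quasipoly f \<longleftrightarrow> (\<exists>N::int. N > 0 \<and> (\<forall>r :: 'v \<Rightarrow> int. \<exists>p. poly_fun p \<and>
      (\<forall>l. (\<forall>v. l v mod N = r v mod N) \<longrightarrow> f l = p l)))"

definition counting :: "(('v \<Rightarrow> int) \<Rightarrow> real) \<Rightarrow> ('v \<Rightarrow> int) \<Rightarrow> real" where
  "counting c l = (\<Sum>m\<in>{m. \<not> (l \<le> m) \<and> c m \<noteq> 0}. c m)"

definition admits_qp ::
  "(('v::finite \<Rightarrow> int) \<Rightarrow> real) \<Rightarrow> ('v \<Rightarrow> real) set \<Rightarrow> (('v \<Rightarrow> int) \<Rightarrow> real) \<Rightarrow> bool" where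
  "admits_qp c K q \<longleftrightarrow> quasipoly q \<and>
     (\<exists>ls::'v \<Rightarrow> int. \<forall>l. real_vec (l - ls) \<in> K \<longrightarrow> counting c l = q l)"

text \<open>Coefficients of t^(-l0) S |_{>=0} and value at 1 of t^(-l0) S |_{not >= 0}.\<close>
definition shift_pos :: "(('v \<Rightarrow> int) \<Rightarrow> real) \<Rightarrow> ('v \<Rightarrow> int) \<Rightarrow> ('v \<Rightarrow> int) \<Rightarrow> real" where
  "shift_pos c l0 = (\<lambda>l. if 0 \<le> l then c (l + l0) else 0)"

definition shift_neg_at_one :: "(('v \<Rightarrow> int) \<Rightarrow> real) \<Rightarrow> ('v \<Rightarrow> int) \<Rightarrow> real" where
  "shift_neg_at_one c l0 = (\<Sum>l\<in>{l. \<not> (0 \<le> l) \<and> c (l + l0) \<noteq> 0}. c (l + l0))"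

end

theory Submission
  imports Defs
begin

text \<open>Since the generators have positive coordinates, some translate ls' + K of the cone lies
  both in ls - l0 + K and in the nonnegative orthant. For l in it, the exponents m of
  t^-l0 S with m not >= l are those of t^-l0 S|>=0 with m not >= l together with all exponents
  of t^-l0 S|not>=0. So the counting function of t^-l0 S|>=0 at l is Q^S(l + l0) minus the
  constant (t^-l0 S|not>=0)(1), i.e. it agrees on ls' + K with the translated quasipolynomial
  Q^S(l + l0) minus that constant, whose value at 0 is the claimed formula. Positivity of the
  generators also makes all counting sums finite: a point of K one of whose coordinates is
  below l_v has all its coordinates bounded.\<close>

definition monomial_fun :: "('v \<Rightarrow> nat) \<Rightarrow> ('v::finite \<Rightarrow> int) \<Rightarrow> real" where
  "monomial_fun \<alpha> x = (\<Prod>v\<in>UNIV. real_of_int (x v) ^ \<alpha> v)"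

lemma poly_fun_iff:
  "poly_fun p \<longleftrightarrow> (\<exists>A a. finite A \<and> p = (\<lambda>x. \<Sum>\<alpha>\<in>A. a \<alpha> * monomial_fun \<alpha> x))"
  unfolding poly_fun_def monomial_fun_def by (auto simp: fun_eq_iff)

lemma poly_fun_monomial: "poly_fun (\<lambda>x. k * monomial_fun \<alpha> x)"
  unfolding poly_fun_iff by (intro exI[of _ "{\<alpha>}"] exI[of _ "\<lambda>_. k"]) auto

lemma poly_fun_const: "poly_fun (\<lambda>x. k)"
  using poly_fun_monomial[of k 0] by (simp add: monomial_fun_def)

lemma poly_fun_coordinate: "poly_fun (\<lambda>x::'v::finite \<Rightarrow> int. real_of_int (x v))"
proof -
  have "monomial_fun (\<lambda>w. if w = v then 1 else 0) x = real_of_int (x v)" for x :: "'v \<Rightarrow> int"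
  proof -
    have "monomial_fun (\<lambda>w. if w = v then 1 else 0) x
        = (\<Prod>w\<in>UNIV. if w = v then real_of_int (x w) else 1)"
      unfolding monomial_fun_def by (intro prod.cong) auto
    then show ?thesis by simp
  qed
  then show ?thesis using poly_fun_monomial[of 1 "\<lambda>w. if w = v then 1 else 0"] by simp
qed

lemma poly_fun_add:
  assumes "poly_fun p" "poly_fun q"
  shows "poly_fun (\<lambda>x. p x + q x)"
proof -
  obtain A a where A: "finite A" "p = (\<lambda>x. \<Sum>\<alpha>\<in>A. a \<alpha> * monomial_fun \<alpha> x)"
    using assms(1) poly_fun_iff by blast
  obtain B b where B: "finite B" "q = (\<lambda>x. \<Sum>\<alpha>\<in>B. b \<alpha> * monomial_fun \<alpha> x)"
    using assms(2) poly_fun_iff by blast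
  define e where "e \<alpha> = (if \<alpha> \<in> A then a \<alpha> else 0) + (if \<alpha> \<in> B then b \<alpha> else 0)" for \<alpha>
  have "p x + q x = (\<Sum>\<alpha>\<in>A \<union> B. e \<alpha> * monomial_fun \<alpha> x)" for x
  proof -
    have "p x = (\<Sum>\<alpha>\<in>A \<union> B. (if \<alpha> \<in> A then a \<alpha> else 0) * monomial_fun \<alpha> x)"
      unfolding A(2) using A(1) B(1) by (intro sum.mono_neutral_cong_left) auto
    moreover have "q x = (\<Sum>\<alpha>\<in>A \<union> B. (if \<alpha> \<in> B then b \<alpha> else 0) * monomial_fun \<alpha> x)"
      unfolding B(2) using A(1) B(1) by (intro sum.mono_neutral_cong_left) auto
    ultimately show ?thesis unfolding e_def distrib_right sum.distrib by simp
  qed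
  then show ?thesis unfolding poly_fun_iff using A B by (intro exI[of _ "A \<union> B"] exI[of _ e]) auto
qed

lemma poly_fun_sum:
  "finite I \<Longrightarrow> (\<And>i. i \<in> I \<Longrightarrow> poly_fun (f i)) \<Longrightarrow> poly_fun (\<lambda>x. \<Sum>i\<in>I. f i x)"
  by (induction I rule: finite_induct) (auto intro: poly_fun_add poly_fun_const)

lemma monomial_fun_add: "monomial_fun (\<alpha> + \<beta>) x = monomial_fun \<alpha> x * monomial_fun \<beta> x"
  unfolding monomial_fun_def by (simp add: prod.distrib[symmetric] power_add)

lemma poly_fun_mult:
  assumes "poly_fun p" "poly_fun q"
  shows "poly_fun (\<lambda>x. p x * q x)"
proof -
  obtain A a where A: "finite A" "p = (\<lambda>x. \<Sum>\<alpha>\<in>A. a \<alpha> * monomial_fun \<alpha> x)"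
    using assms(1) poly_fun_iff by blast
  obtain B b where B: "finite B" "q = (\<lambda>x. \<Sum>\<alpha>\<in>B. b \<alpha> * monomial_fun \<alpha> x)"
    using assms(2) poly_fun_iff by blast
  have "p x * q x = (\<Sum>\<alpha>\<in>A. \<Sum>\<beta>\<in>B. (a \<alpha> * b \<beta>) * monomial_fun (\<alpha> + \<beta>) x)" for x
    unfolding A(2) B(2) sum_product monomial_fun_add
    by (intro sum.cong refl) (simp add: algebra_simps)
  moreover have "poly_fun (\<lambda>x. \<Sum>\<alpha>\<in>A. \<Sum>\<beta>\<in>B. (a \<alpha> * b \<beta>) * monomial_fun (\<alpha> + \<beta>) x)"
    using A B by (intro poly_fun_sum poly_fun_monomial)
  ultimately show ?thesis by simp
qed

lemma poly_fun_prod: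
  "finite I \<Longrightarrow> (\<And>i. i \<in> I \<Longrightarrow> poly_fun (f i)) \<Longrightarrow> poly_fun (\<lambda>x. \<Prod>i\<in>I. f i x)"
  by (induction I rule: finite_induct) (auto intro: poly_fun_mult poly_fun_const)

lemma poly_fun_power: "poly_fun p \<Longrightarrow> poly_fun (\<lambda>x. p x ^ n)"
  by (induction n) (auto intro: poly_fun_mult poly_fun_const)

lemma poly_fun_translate:
  assumes "poly_fun p"
  shows "poly_fun (\<lambda>x. p (x + y))"
proof -
  obtain A a where A: "finite A" "p = (\<lambda>x. \<Sum>\<alpha>\<in>A. a \<alpha> * monomial_fun \<alpha> x)"
    using assms poly_fun_iff by blast
  have "poly_fun (\<lambda>x. \<Sum>\<alpha>\<in>A. a \<alpha> * (\<Prod>v\<in>UNIV. (real_of_int (x v) + real_of_int (y v)) ^ \<alpha> v))"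
    using A(1) by (intro poly_fun_sum poly_fun_mult poly_fun_const poly_fun_prod poly_fun_power
        poly_fun_add poly_fun_coordinate) auto
  then show ?thesis unfolding A(2) monomial_fun_def by simp
qed

lemma quasipoly_poly_fun: "poly_fun p \<Longrightarrow> quasipoly p"
  unfolding quasipoly_def by (intro exI[of _ 1]) auto

lemma quasipoly_translate_diff_const:
  assumes "quasipoly f"
  shows "quasipoly (\<lambda>x. f (x + y) - k)"
proof -
  obtain N :: int where N: "N > 0" "\<forall>r :: 'a \<Rightarrow> int. \<exists>p. poly_fun p \<and>
      (\<forall>x. (\<forall>v. x v mod N = r v mod N) \<longrightarrow> f x = p x)"
    using assms unfolding quasipoly_def by blast
  have "\<exists>p. poly_fun p \<and> (\<forall>x. (\<forall>v. x v mod N = r v mod N) \<longrightarrow> f (x + y) - k = p x)" for r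
  proof -
    obtain p where p: "poly_fun p" "\<forall>x. (\<forall>v. x v mod N = (r + y) v mod N) \<longrightarrow> f x = p x"
      using N(2) by blast
    have "f (x + y) - k = p (x + y) + - k" if "\<forall>v. x v mod N = r v mod N" for x
    proof -
      have "(x + y) v mod N = (r + y) v mod N" for v
        using mod_add_cong[OF that[rule_format] refl] by simp
      then show ?thesis using p(2) by simp
    qed
    moreover have "poly_fun (\<lambda>x. p (x + y) + - k)"
      by (rule poly_fun_add[OF poly_fun_translate[OF p(1)] poly_fun_const])
    ultimately show ?thesis by blast
  qed
  then show ?thesis unfolding quasipoly_def using N(1) by blast
qed

lemma real_vec_eq_0_iff: "real_vec l = 0 \<longleftrightarrow> l = 0"
  by (simp add: real_vec_def fun_eq_iff)

lemma gen_cone_empty: "gen_cone {} = {0}"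
  by (auto simp: gen_cone_def)

lemma gen_cone_add:
  assumes "x \<in> gen_cone Vs" "y \<in> gen_cone Vs"
  shows "x + y \<in> gen_cone Vs"
proof -
  obtain a where a: "\<forall>j\<in>Vs. 0 \<le> a j" "x = (\<lambda>v. \<Sum>j\<in>Vs. a j * real_of_int (j v))"
    using assms(1) unfolding gen_cone_def by blast
  obtain b where b: "\<forall>j\<in>Vs. 0 \<le> b j" "y = (\<lambda>v. \<Sum>j\<in>Vs. b j * real_of_int (j v))"
    using assms(2) unfolding gen_cone_def by blast
  have "x + y = (\<lambda>v. \<Sum>j\<in>Vs. (a j + b j) * real_of_int (j v))"
    unfolding a(2) b(2) by (simp add: fun_eq_iff distrib_right sum.distrib)
  then show ?thesis unfolding gen_cone_def using a(1) b(1) by (intro CollectI exI[of _ "a + b"]) auto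
qed

lemma gen_cone_generator_multiple:
  assumes "finite Vs" "j \<in> Vs" "0 \<le> t"
  shows "(\<lambda>v. t * real_of_int (j v)) \<in> gen_cone Vs"
proof -
  have "(\<lambda>v. t * real_of_int (j v)) = (\<lambda>v. \<Sum>i\<in>Vs. (if i = j then t else 0) * real_of_int (i v))"
    using assms(1,2) by (simp add: if_distrib[where f = "\<lambda>c. c * _"] cong: if_cong)
  then show ?thesis
    unfolding gen_cone_def using assms(3) by (intro CollectI exI[of _ "\<lambda>i. if i = j then t else 0"]) auto
qed

lemma gen_cone_coordinate_nonneg:
  assumes "\<forall>j\<in>Vs. \<forall>v. 0 \<le> j v" "real_vec m \<in> gen_cone Vs"
  shows "0 \<le> m v"
proof -
  obtain a where a: "\<forall>j\<in>Vs. 0 \<le> a j" "real_vec m = (\<lambda>v. \<Sum>j\<in>Vs. a j * real_of_int (j v))"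
    using assms(2) unfolding gen_cone_def by blast
  have "real_of_int (m v) = (\<Sum>j\<in>Vs. a j * real_of_int (j v))"
    using fun_cong[OF a(2), of v] by (simp add: real_vec_def)
  also have "\<dots> \<ge> 0" using a(1) assms(1) by (intro sum_nonneg) simp
  finally show ?thesis by simp
qed

lemma translate_gen_cone_within_orthant:
  fixes d :: "'v::finite \<Rightarrow> int"
  assumes "finite Vs" "\<forall>j\<in>Vs. \<forall>v. 0 \<le> j v" "j \<in> Vs" "\<forall>v. 0 < j v"
  obtains ls where "\<And>l. real_vec (l - ls) \<in> gen_cone Vs \<Longrightarrow> 0 \<le> l \<and> real_vec (l - d) \<in> gen_cone Vs"
proof
  define N where "N = (\<Sum>v\<in>UNIV. \<bar>d v\<bar>)"
  define ls where "ls = d + (\<lambda>v. N * j v)"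
  fix l assume l: "real_vec (l - ls) \<in> gen_cone Vs"
  have "N \<ge> 0" unfolding N_def by (rule sum_nonneg) simp
  have "0 \<le> ls v" for v
  proof -
    have "\<bar>d v\<bar> \<le> N" unfolding N_def by (rule member_le_sum) auto
    moreover have "N \<le> N * j v"
      using \<open>N \<ge> 0\<close> assms(4) by (simp add: mult_le_cancel_left1 int_one_le_iff_zero_less)
    ultimately show ?thesis unfolding ls_def by simp
  qed
  moreover have "0 \<le> (l - ls) v" for v
    by (rule gen_cone_coordinate_nonneg[OF assms(2) l])
  ultimately have "0 \<le> l" by (simp add: le_fun_def) (meson order_trans)
  moreover have "real_vec (l - d) = real_vec (l - ls) + (\<lambda>v. real_of_int N * real_of_int (j v))"
    by (simp add: ls_def real_vec_def fun_eq_iff)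
  then have "real_vec (l - d) \<in> gen_cone Vs"
    using \<open>N \<ge> 0\<close> by (simp add: gen_cone_add gen_cone_generator_multiple l assms(1,3))
  ultimately show "0 \<le> l \<and> real_vec (l - d) \<in> gen_cone Vs" by blast
qed

lemma gen_cone_coordinates_comparable:
  fixes Vs :: "('v::finite \<Rightarrow> int) set"
  assumes "finite Vs" "\<forall>j\<in>Vs. \<forall>v. 0 < j v"
  obtains M :: int where "0 \<le> M" "\<And>m x v. real_vec m \<in> gen_cone Vs \<Longrightarrow> m x \<le> M * m v"
proof
  define M where "M = (\<Sum>j\<in>Vs. \<Sum>w\<in>UNIV. j w)"
  show "0 \<le> M" unfolding M_def using assms(2) by (auto intro!: sum_nonneg simp: less_imp_le)
  have generator_le_M: "j x \<le> M * j v" if "j \<in> Vs" for j x v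
  proof -
    have "j x \<le> (\<Sum>w\<in>UNIV. j w)"
      using assms(2) that by (intro member_le_sum) (auto simp: less_imp_le)
    also have "\<dots> \<le> M" unfolding M_def using assms that
      by (intro member_le_sum) (auto intro!: sum_nonneg simp: less_imp_le)
    also have "\<dots> \<le> M * j v"
      using assms(2) that \<open>0 \<le> M\<close> by (simp add: mult_le_cancel_left1 int_one_le_iff_zero_less)
    finally show ?thesis .
  qed
  fix m x v assume "real_vec m \<in> gen_cone Vs"
  then obtain a where a: "\<forall>j\<in>Vs. 0 \<le> a j" "real_vec m = (\<lambda>v. \<Sum>j\<in>Vs. a j * real_of_int (j v))"
    unfolding gen_cone_def by blast
  have m: "real_of_int (m v) = (\<Sum>j\<in>Vs. a j * real_of_int (j v))" for v
    using fun_cong[OF a(2), of v] by (simp add: real_vec_def)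
  have "real_of_int (m x) \<le> (\<Sum>j\<in>Vs. a j * (real_of_int M * real_of_int (j v)))"
    unfolding m using a(1) generator_le_M
    by (intro sum_mono mult_left_mono) (auto simp flip: of_int_mult)
  also have "\<dots> = real_of_int M * real_of_int (m v)"
    unfolding m sum_distrib_left by (intro sum.cong) auto
  finally show "m x \<le> M * m v" by (simp flip: of_int_mult)
qed

lemma finite_counting_support:
  fixes c :: "('v::finite \<Rightarrow> int) \<Rightarrow> real"
  assumes "finite Vs" "\<forall>j\<in>Vs. \<forall>v. 0 < j v" "\<forall>m. c m \<noteq> 0 \<longrightarrow> real_vec m \<in> gen_cone Vs"
  shows "finite {m. \<not> l \<le> m \<and> c m \<noteq> 0}"
proof -
  obtain M where "0 \<le> M" and M: "\<And>m x v. real_vec m \<in> gen_cone Vs \<Longrightarrow> m x \<le> M * m v"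
    using gen_cone_coordinates_comparable[OF assms(1,2)] by blast
  define B where "B = M * (\<Sum>v\<in>UNIV. \<bar>l v\<bar>)"
  have "{m. \<not> l \<le> m \<and> c m \<noteq> 0} \<subseteq> {m. \<forall>x. m x \<in> {0..B}}"
  proof safe
    fix m x assume "\<not> l \<le> m" "c m \<noteq> 0"
    then obtain v where "m v < l v" and cone: "real_vec m \<in> gen_cone Vs"
      using assms(3) by (auto simp: le_fun_def not_le)
    have "m x \<le> M * m v" using M[OF cone] .
    also have "\<dots> \<le> M * \<bar>l v\<bar>" using \<open>m v < l v\<close> \<open>0 \<le> M\<close> by (intro mult_left_mono) auto
    also have "\<dots> \<le> B" unfolding B_def using \<open>0 \<le> M\<close> by (intro mult_left_mono member_le_sum) auto
    finally show "m x \<in> {0..B}"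
      using gen_cone_coordinate_nonneg[of Vs, OF _ cone] assms(2) by (simp add: less_imp_le)
  qed
  moreover have "finite {m :: 'v \<Rightarrow> int. \<forall>x. m x \<in> {0..B}}"
    using finite_set_of_finite_funs[of "UNIV :: 'v set" "{0..B}" 0] by simp
  ultimately show ?thesis by (rule finite_subset)
qed

lemma counting_shift_split:
  fixes l l0 :: "'v \<Rightarrow> int"
  assumes "finite {m. \<not> l + l0 \<le> m \<and> c m \<noteq> 0}" "0 \<le> l"
  shows "counting c (l + l0) = counting (shift_pos c l0) l + shift_neg_at_one c l0"
proof -
  define H where "H = {m. \<not> l \<le> m \<and> c (m + l0) \<noteq> 0}"
  define H_pos where "H_pos = {m. \<not> l \<le> m \<and> shift_pos c l0 m \<noteq> 0}"
  define H_neg where "H_neg = {m. \<not> 0 \<le> m \<and> c (m + l0) \<noteq> 0}"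
  have shift_le_iff: "l + l0 \<le> m + l0 \<longleftrightarrow> l \<le> m" for m by (simp add: le_fun_def)
  have shift_H: "{m. \<not> l + l0 \<le> m \<and> c m \<noteq> 0} = (\<lambda>m. m + l0) ` H"
  proof safe
    fix m assume "\<not> l + l0 \<le> m" "c m \<noteq> 0"
    then show "m \<in> (\<lambda>m. m + l0) ` H"
      using shift_le_iff[of "m - l0"] by (intro image_eqI[of _ _ "m - l0"]) (auto simp: H_def)
  qed (auto simp: H_def shift_le_iff)
  have inj: "inj_on (\<lambda>m. m + l0) H" by (rule inj_onI) simp
  have "finite H" using assms(1) unfolding shift_H using inj by (rule finite_imageD)
  have H_split: "H = H_pos \<union> H_neg" "H_pos \<inter> H_neg = {}"
    using assms(2) unfolding H_def H_pos_def H_neg_def shift_pos_def by (auto dest: order_trans)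
  have "counting c (l + l0) = (\<Sum>m\<in>H. c (m + l0))"
    unfolding counting_def shift_H using inj by (simp add: sum.reindex)
  also have "\<dots> = (\<Sum>m\<in>H_pos. c (m + l0)) + (\<Sum>m\<in>H_neg. c (m + l0))"
    using \<open>finite H\<close> H_split by (simp add: sum.union_disjoint)
  also have "(\<Sum>m\<in>H_pos. c (m + l0)) = counting (shift_pos c l0) l"
    unfolding counting_def H_pos_def by (intro sum.cong) (auto simp: shift_pos_def split: if_splits)
  also have "(\<Sum>m\<in>H_neg. c (m + l0)) = shift_neg_at_one c l0"
    unfolding shift_neg_at_one_def H_neg_def ..
  finally show ?thesis .
qed

text \<open>Over the cone {0} only the single point ls is constrained, so an affine function can take
  the prescribed value at 0 and the value of the counting function at ls.\<close>

lemma admits_qp_zero_cone: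
  fixes c :: "('v::finite \<Rightarrow> int) \<Rightarrow> real"
  shows "\<exists>q. admits_qp c {0} q \<and> q 0 = a"
proof -
  fix v :: 'v
  define ls :: "'v \<Rightarrow> int" where "ls = (\<lambda>_. 1)"
  define q where "q l = a + (counting c ls - a) * real_of_int (l v)" for l :: "'v \<Rightarrow> int"
  have "poly_fun q"
    unfolding q_def[abs_def]
    by (rule poly_fun_add[OF poly_fun_const poly_fun_mult[OF poly_fun_const poly_fun_coordinate]])
  moreover have "counting c l = q l" if "real_vec (l - ls) \<in> {0}" for l
    using that by (simp add: real_vec_eq_0_iff q_def ls_def)
  ultimately have "admits_qp c {0} q"
    unfolding admits_qp_def by (blast intro: quasipoly_poly_fun)
  moreover have "q 0 = a" by (simp add: q_def)
  ultimately show ?thesis by blast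
qed

theorem proposition3p7:
  fixes Vs :: "('v::finite \<Rightarrow> int) set"
    and c :: "('v \<Rightarrow> int) \<Rightarrow> real"
    and QS :: "('v \<Rightarrow> int) \<Rightarrow> real"
    and ls l0 :: "'v \<Rightarrow> int"
  assumes "finite Vs"
    and "\<forall>j\<in>Vs. \<forall>v. 0 < j v"
    and "\<forall>l. c l \<noteq> 0 \<longrightarrow> real_vec l \<in> gen_cone Vs"
    and "quasipoly QS"
    and "\<forall>l. real_vec (l - ls) \<in> gen_cone Vs \<longrightarrow> QS l = counting c l"
  shows "\<exists>q. admits_qp (shift_pos c l0) (gen_cone Vs) q \<and>
           QS l0 = shift_neg_at_one c l0 + q 0"
proof (cases "Vs = {}")
  case True
  then show ?thesis
    using admits_qp_zero_cone[of "shift_pos c l0" "QS l0 - shift_neg_at_one c l0"]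
    by (auto simp: gen_cone_empty)
next
  case False
  then obtain j where "j \<in> Vs" by blast
  with assms(1,2) obtain ls' where ls':
    "\<And>l. real_vec (l - ls') \<in> gen_cone Vs \<Longrightarrow> 0 \<le> l \<and> real_vec (l + l0 - ls) \<in> gen_cone Vs"
    using translate_gen_cone_within_orthant[of Vs j "ls - l0"] by (auto simp: less_imp_le diff_diff_eq2)
  define q where "q l = QS (l + l0) - shift_neg_at_one c l0" for l
  have "counting (shift_pos c l0) l = q l" if "real_vec (l - ls') \<in> gen_cone Vs" for l
    using counting_shift_split[OF finite_counting_support[OF assms(1-3)]] ls'[OF that] assms(5)
    by (simp add: q_def)
  moreover have "quasipoly q"
    unfolding q_def[abs_def] by (rule quasipoly_translate_diff_const[OF assms(4)])
  ultimately have "admits_qp (shift_pos c l0) (gen_cone Vs) q"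
    unfolding admits_qp_def by blast
  then show ?thesis by (auto simp: q_def)
qed

end
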